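(* If $G_1$ and $G_2$ are topological Abelian groups with property $\mathfrak{h}$, then $G_1\times G_2$ has property $\mathfrak{h}$. Consequently the class of topological Abelian groups with property $\mathfrak{h}$ is closed under finite products.
   Context: $\mathbb{T}$ is the circle group. A subgroup $N$ of a topological Abelian group $G$ is $h$-embedded in $G$ if every group homomorphism $N\to\mathbb{T}$ extends to a continuous homomorphism $G\to\mathbb{T}$. $G$ has property $\mathfrak{h}$ if every countable subgroup of $G$ is $h$-embedded in $G$. *)

theory Defs
  imports "HOL-Analysis.Analysis"
begin

text \<open>The circle group is modelled as the unit circle in the complex plane under
multiplication. A subgroup of an abelian group is a set containing 0, closed under
addition and negation.\<close>

definition ab_subgroup :: "'a::ab_group_add set \<Rightarrow> bool" where
  "ab_subgroup N \<longleftrightarrow> 0 \<in> N \<and> (\<forall>x\<in>N. \<forall>y\<in>N. x + y \<in> N) \<and> (\<forall>x\<in>N. - x \<in> N)"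

text \<open>A (not necessarily continuous) group homomorphism from N into the circle group.\<close>
definition circle_hom_on :: "'a::ab_group_add set \<Rightarrow> ('a \<Rightarrow> complex) \<Rightarrow> bool" where
  "circle_hom_on N f \<longleftrightarrow> (\<forall>x\<in>N. f x \<in> sphere 0 1) \<and> (\<forall>x\<in>N. \<forall>y\<in>N. f (x + y) = f x * f y)"

definition h_embedded :: "'a::{topological_space, ab_group_add} set \<Rightarrow> bool" where
  "h_embedded N \<longleftrightarrow> (\<forall>f. circle_hom_on N f \<longrightarrow>
      (\<exists>g. circle_hom_on UNIV g \<and> continuous_on UNIV g \<and> (\<forall>x\<in>N. g x = f x)))"

definition property_h :: "'a::{topological_space, ab_group_add} itself \<Rightarrow> bool" where
  "property_h _ \<longleftrightarrow> (\<forall>N::'a set. ab_subgroup N \<and> countable N \<longrightarrow> h_embedded N)"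

end

theory Submission
  imports Defs
begin

text \<open>Let \<open>N\<close> be a countable subgroup of \<open>G\<^sub>1 \<times> G\<^sub>2\<close> and \<open>f\<close> a character of \<open>N\<close>.
The slice \<open>{a. (a, 0) \<in> N}\<close> is a countable subgroup of \<open>G\<^sub>1\<close>, so \<open>f(-, 0)\<close> extends to a
continuous character \<open>g\<^sub>1\<close> of \<open>G\<^sub>1\<close>. The quotient \<open>f(x, y) / g\<^sub>1 x\<close> then depends only on
\<open>y\<close>: two points of \<open>N\<close> with the same second coordinate differ by an element of the slice,
where \<open>f\<close> and \<open>g\<^sub>1\<close> agree. It is therefore a character of the countable subgroup
\<open>snd ` N\<close> of \<open>G\<^sub>2\<close>, which extends to a continuous character \<open>g\<^sub>2\<close>, and
\<open>g\<^sub>1 x \<cdot> g\<^sub>2 y\<close> extends \<open>f\<close>.\<close>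

lemma ab_subgroupD:
  assumes "ab_subgroup N"
  shows "0 \<in> N" "x \<in> N \<Longrightarrow> y \<in> N \<Longrightarrow> x + y \<in> N" "x \<in> N \<Longrightarrow> - x \<in> N"
  using assms unfolding ab_subgroup_def by auto

lemma circle_hom_onD:
  assumes "circle_hom_on N f"
  shows "x \<in> N \<Longrightarrow> norm (f x) = 1" "x \<in> N \<Longrightarrow> y \<in> N \<Longrightarrow> f (x + y) = f x * f y"
  using assms unfolding circle_hom_on_def by auto

lemma ab_subgroup_fst_slice:
  assumes "ab_subgroup (N :: ('a::ab_group_add \<times> 'b::ab_group_add) set)"
  shows "ab_subgroup {a. (a, 0) \<in> N}"
  unfolding ab_subgroup_def
proof (intro conjI ballI; simp)
  show "(0, 0) \<in> N" using ab_subgroupD(1)[OF assms] by (simp add: zero_prod_def)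
  show "(x + y, 0) \<in> N" if "(x, 0) \<in> N" "(y, 0) \<in> N" for x y
    using ab_subgroupD(2)[OF assms that] by simp
  show "(- x, 0) \<in> N" if "(x, 0) \<in> N" for x
    using ab_subgroupD(3)[OF assms that] by simp
qed

lemma ab_subgroup_snd_image:
  assumes "ab_subgroup (N :: ('a::ab_group_add \<times> 'b::ab_group_add) set)"
  shows "ab_subgroup (snd ` N)"
  unfolding ab_subgroup_def
proof (intro conjI ballI)
  show "0 \<in> snd ` N" using ab_subgroupD(1)[OF assms] by (metis image_eqI snd_zero)
  show "y + y' \<in> snd ` N" if "y \<in> snd ` N" "y' \<in> snd ` N" for y y'
  proof -
    from that obtain p q where "p \<in> N" "q \<in> N" "y = snd p" "y' = snd q" by auto
    then show ?thesis using ab_subgroupD(2)[OF assms] by (metis image_eqI snd_add)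
  qed
  show "- y \<in> snd ` N" if "y \<in> snd ` N" for y
  proof -
    from that obtain p where "p \<in> N" "y = snd p" by auto
    then show ?thesis using ab_subgroupD(3)[OF assms] by (metis image_eqI snd_uminus)
  qed
qed

lemma countable_fst_slice: "countable N \<Longrightarrow> countable {a. (a, b) \<in> N}"
  by (rule countable_subset[of _ "fst ` N"]) force+

lemma circle_hom_on_fst_slice:
  "circle_hom_on N f \<Longrightarrow> circle_hom_on {a. (a, 0) \<in> N} (\<lambda>a. f (a, 0))"
  unfolding circle_hom_on_def by (metis add_0 add_Pair mem_Collect_eq)

lemma circle_hom_on_UNIV_nonzero: "circle_hom_on UNIV g \<Longrightarrow> g x \<noteq> 0"
  using circle_hom_onD(1)[of UNIV g x] by auto

lemma circle_hom_on_divide_snd: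
  fixes N :: "('a::ab_group_add \<times> 'b::ab_group_add) set"
  assumes N: "ab_subgroup N" and f: "circle_hom_on N f" and g: "circle_hom_on UNIV g"
    and g_ext: "\<And>a. (a, 0) \<in> N \<Longrightarrow> g a = f (a, 0)"
  obtains h where "circle_hom_on (snd ` N) h" "\<And>x y. (x, y) \<in> N \<Longrightarrow> f (x, y) = g x * h y"
proof -
  have g_nz: "\<And>x. g x \<noteq> 0" using circle_hom_on_UNIV_nonzero[OF g] .
  have quotient_eq: "f (x, y) / g x = f (x', y) / g x'" if "(x, y) \<in> N" "(x', y) \<in> N" for x x' y
  proof -
    have diff: "(x - x', 0) \<in> N"
      using ab_subgroupD(2)[OF N that(1) ab_subgroupD(3)[OF N that(2)]] by simp
    have "f (x, y) = f ((x', y) + (x - x', 0))" by simp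
    also have "\<dots> = f (x', y) * g (x - x')"
      using circle_hom_onD(2)[OF f that(2) diff] g_ext[OF diff] by simp
    finally have "f (x, y) = f (x', y) * g (x - x')" .
    moreover have "g x = g x' * g (x - x')"
      using circle_hom_onD(2)[OF g, of x' "x - x'"] by simp
    ultimately show ?thesis using g_nz by (simp add: field_simps)
  qed
  define h where "h y = f (SOME x. (x, y) \<in> N, y) / g (SOME x. (x, y) \<in> N)" for y
  have h_eq: "h y = f (x, y) / g x" if "(x, y) \<in> N" for x y
    unfolding h_def using quotient_eq someI[of "\<lambda>x. (x, y) \<in> N", OF that] that by blast
  have "circle_hom_on (snd ` N) h"
    unfolding circle_hom_on_def
  proof (intro conjI ballI)
    fix y assume "y \<in> snd ` N"
    then obtain x where xy: "(x, y) \<in> N" by force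
    show "h y \<in> sphere 0 1"
      using h_eq[OF xy] circle_hom_onD(1)[OF f xy] circle_hom_onD(1)[OF g]
      by (simp add: norm_divide)
  next
    fix y y' assume "y \<in> snd ` N" "y' \<in> snd ` N"
    then obtain x x' where xy: "(x, y) \<in> N" and xy': "(x', y') \<in> N" by force
    have "(x + x', y + y') \<in> N" using ab_subgroupD(2)[OF N xy xy'] by simp
    then have "h (y + y') = f (x + x', y + y') / g (x + x')" by (rule h_eq)
    then show "h (y + y') = h y * h y'"
      using circle_hom_onD(2)[OF f xy xy'] circle_hom_onD(2)[OF g, of x x']
      by (simp add: h_eq[OF xy] h_eq[OF xy'])
  qed
  moreover have "f (x, y) = g x * h y" if "(x, y) \<in> N" for x y
    using h_eq[OF that] g_nz by simp
  ultimately show thesis by (rule that)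
qed

lemma continuous_circle_hom_times:
  fixes g1 :: "'a::{topological_space, ab_group_add} \<Rightarrow> complex"
    and g2 :: "'b::{topological_space, ab_group_add} \<Rightarrow> complex"
  assumes "circle_hom_on UNIV g1" "continuous_on UNIV g1"
    and "circle_hom_on UNIV g2" "continuous_on UNIV g2"
  shows "circle_hom_on UNIV (\<lambda>p. g1 (fst p) * g2 (snd p))"
    and "continuous_on UNIV (\<lambda>p. g1 (fst p) * g2 (snd p))"
  using assms(1,3) unfolding circle_hom_on_def
  by (simp_all add: norm_mult continuous_on_mult continuous_on_compose2[OF assms(2)]
      continuous_on_compose2[OF assms(4)] continuous_on_fst continuous_on_snd)

lemma h_embedded_prod:
  fixes N :: "('a::{topological_space, ab_group_add} \<times> 'b::{topological_space, ab_group_add}) set"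
  assumes N: "ab_subgroup N"
    and slice: "h_embedded {a. (a, 0) \<in> N}" and image: "h_embedded (snd ` N)"
  shows "h_embedded N"
  unfolding h_embedded_def
proof (intro allI impI)
  fix f assume f: "circle_hom_on N f"
  obtain g1 where g1: "circle_hom_on UNIV g1" "continuous_on UNIV g1"
    and g1_ext: "\<And>a. (a, 0) \<in> N \<Longrightarrow> g1 a = f (a, 0)"
    using slice circle_hom_on_fst_slice[OF f] unfolding h_embedded_def by auto
  obtain h where h: "circle_hom_on (snd ` N) h"
    and f_eq: "\<And>x y. (x, y) \<in> N \<Longrightarrow> f (x, y) = g1 x * h y"
    using circle_hom_on_divide_snd[OF N f g1(1) g1_ext] by blast
  obtain g2 where g2: "circle_hom_on UNIV g2" "continuous_on UNIV g2"
    and g2_ext: "\<And>y. y \<in> snd ` N \<Longrightarrow> g2 y = h y"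
    using image h unfolding h_embedded_def by blast
  have "\<forall>p\<in>N. g1 (fst p) * g2 (snd p) = f p"
    using f_eq g2_ext by force
  with continuous_circle_hom_times[OF g1 g2]
  show "\<exists>g. circle_hom_on UNIV g \<and> continuous_on UNIV g \<and> (\<forall>p\<in>N. g p = f p)"
    by blast
qed

theorem proposition2p4:
  assumes "property_h TYPE('a::topological_ab_group_add)"
      and "property_h TYPE('b::topological_ab_group_add)"
  shows "property_h TYPE('a \<times> 'b)"
  unfolding property_h_def
proof (intro allI impI, elim conjE)
  fix N :: "('a \<times> 'b) set"
  assume N: "ab_subgroup N" and "countable N"
  have "h_embedded {a. (a, 0) \<in> N}"
    using assms(1) ab_subgroup_fst_slice[OF N] countable_fst_slice[OF \<open>countable N\<close>]
    unfolding property_h_def by blast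
  moreover have "h_embedded (snd ` N)"
    using assms(2) ab_subgroup_snd_image[OF N] \<open>countable N\<close>
    unfolding property_h_def by blast
  ultimately show "h_embedded N" using N by (intro h_embedded_prod)
qed

end
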